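(* Let $\ell \geq 2$ be an integer and let $G$ be the following "caterpillar" graph on $6\ell-1$ vertices. Its spine is a path $B_0^{L}, B_1^{L}, \ldots, B_{\ell-1}^{L}, B_\ell, B_{\ell-1}^{R}, \ldots, B_1^{R}, B_0^{R}$ of $2\ell+1$ vertices (consecutive vertices adjacent). For each $j \in \{1,\ldots,\ell-1\}$ and each side $\sigma \in \{L,R\}$, the spine vertex $B_j^{\sigma}$ carries two additional pendant (degree-one) vertices, both called $C_j$ (one "above" and one "below"); the central vertex $B_\ell$ carries two pendant vertices, both called $C_\ell$; the endpoints $B_0^{L},B_0^{R}$ carry no pendant vertices. Write $B_j$ for either copy $B_j^L,B_j^R$. Define the potential $W$ (the same value on all vertices sharing a label) by $W(B_0)=0$; $W(B_j)=-\tfrac12-\tfrac{j}{4\ell}$ for $j\in\{1,\ldots,\ell\}$; $W(C_1)=\frac{1}{\frac{11}{12}-\frac{1}{8\ell}}-1$; $W(C_j)=\frac{1}{\frac23-\frac{j}{8\ell}}-1$ for $j\in\{2,\ldots,\ell-1\}$; $W(C_\ell)=7$. Then every vertex other than $B_\ell$ has a neighbor with strictly smaller potential (so $B_\ell$ is the unique local minimum and the unique global minimum of $W$), and the gap $\gamma$ between the smallest and second-smallest eigenvalues of $H_{G,W}$ satisfies $$\gamma < 2\left(\tfrac{2}{3}\right)^{2\ell-1}.$$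
   Context: For a finite simple undirected graph $G$ with vertex set $V_G$, let $\mathcal{H}_G$ be the complex Hilbert space with orthonormal basis $\{|x\rangle : x\in V_G\}$. The graph Laplacian is $L_G=\sum_{x} d_x |x\rangle\langle x| - \sum_{x\sim y}|x\rangle\langle y|$, where $d_x$ is the degree of $x$ and the second sum runs over ordered pairs of adjacent vertices. For a potential $W:V_G\to\mathbb{R}$, $H_{G,W}=L_G+\sum_{x} W(x)|x\rangle\langle x|$. A vertex $x$ is a local minimum of $W$ if $W(x)\le W(y)$ for all neighbors $y$ of $x$. *)

theory Defs
  imports "Jordan_Normal_Form.Char_Poly" "HOL-Library.Multiset"
begin

text \<open>Graphs on the vertex set {0..<n}, given by a symmetric irreflexive adjacency relation E.
  The Hilbert space is C^n with the standard basis; operators are complex n x n matrices.\<close>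

definition degree_of :: "nat \<Rightarrow> (nat \<Rightarrow> nat \<Rightarrow> bool) \<Rightarrow> nat \<Rightarrow> nat" where
  "degree_of n E x = card {y. y < n \<and> E x y}"

definition laplacian :: "nat \<Rightarrow> (nat \<Rightarrow> nat \<Rightarrow> bool) \<Rightarrow> complex mat" where
  "laplacian n E = mat n n (\<lambda>(x, y).
      (if x = y then of_nat (degree_of n E x) else 0) - (if E x y then 1 else 0))"

definition hamiltonian :: "nat \<Rightarrow> (nat \<Rightarrow> nat \<Rightarrow> bool) \<Rightarrow> (nat \<Rightarrow> real) \<Rightarrow> complex mat" where
  "hamiltonian n E W = laplacian n E + mat n n (\<lambda>(x, y). if x = y then complex_of_real (W x) else 0)"

text \<open>Eigenvalues counted with algebraic multiplicity (roots of the characteristic polynomial),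
  in increasing order. For a Hermitian matrix all eigenvalues are real, so taking real parts
  loses nothing.\<close>

definition sorted_eigenvalues :: "complex mat \<Rightarrow> real list" where
  "sorted_eigenvalues A = sorted_list_of_multiset (image_mset Re (proots (char_poly A)))"

definition spectral_gap :: "complex mat \<Rightarrow> real" where
  "spectral_gap A = sorted_eigenvalues A ! 1 - sorted_eigenvalues A ! 0"

definition local_min :: "nat \<Rightarrow> (nat \<Rightarrow> nat \<Rightarrow> bool) \<Rightarrow> (nat \<Rightarrow> real) \<Rightarrow> nat \<Rightarrow> bool" where
  "local_min n E W x = (\<forall>y < n. E x y \<longrightarrow> W x \<le> W y)"

text \<open>Encoding for parameter l: spine vertices 0..2l are the path
  B_0^L, B_1^L, ..., B_{l-1}^L, B_l, B_{l-1}^R, ..., B_0^R (so vertex i is at index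
  level i = min i (2l-i), and B_l = vertex l). The pendant vertices are 2l+1 .. 6l-2;
  pendant v is attached to spine vertex cat_par l v in {1..2l-1}, and each such spine vertex
  carries exactly two pendants.\<close>

definition cat_n :: "nat \<Rightarrow> nat" where
  "cat_n l = 6 * l - 1"

definition cat_level :: "nat \<Rightarrow> nat \<Rightarrow> nat" where
  "cat_level l i = min i (2 * l - i)"

definition cat_par :: "nat \<Rightarrow> nat \<Rightarrow> nat" where
  "cat_par l v = (v - (2 * l + 1)) div 2 + 1"

definition cat_adj :: "nat \<Rightarrow> nat \<Rightarrow> nat \<Rightarrow> bool" where
  "cat_adj l u v =
     ((u \<le> 2 * l \<and> v \<le> 2 * l \<and> (u = v + 1 \<or> v = u + 1))
      \<or> (2 * l < u \<and> u < cat_n l \<and> v = cat_par l u)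
      \<or> (2 * l < v \<and> v < cat_n l \<and> u = cat_par l v))"

text \<open>Potential: spine vertex of level j is B_j, pendant attached to a spine vertex of level j
  is C_j.\<close>

definition cat_W :: "nat \<Rightarrow> nat \<Rightarrow> real" where
  "cat_W l v =
     (if v \<le> 2 * l then
        (let j = cat_level l v in
           if j = 0 then 0 else - 1/2 - real j / (4 * real l))
      else
        (let j = cat_level l (cat_par l v) in
           if j = l then 7
           else if j = 1 then 1 / (11/12 - 1 / (8 * real l)) - 1
           else 1 / (2/3 - real j / (8 * real l)) - 1))"

end

theory Submission
  imports Defs "Jordan_Normal_Form.Spectral_Radius" "HOL-Analysis.L2_Norm"
begin

text \<open>The potential is tuned so that the amplitudes \<open>(2/3)^(j-1)\<close> on \<open>B_j\<close>, with each
  pendant \<open>C_j\<close> carrying \<open>1 / (1 + W(C_j))\<close> times the amplitude of its spine vertex, form a positive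
  vector \<open>\<psi>\<close> with \<open>H \<psi> = 0\<close>. The ground state representation
  \<open>\<langle>v, H v\<rangle> = 1/2 \<Sum>\<^bsub>x\<sim>y\<^esub> \<psi> x \<psi> y |v x / \<psi> x - v y / \<psi> y|\<^sup>2\<close> shows that \<open>H \<ge> 0\<close> and, the
  graph being connected, that \<open>H\<close> is positive on the orthogonal complement of \<open>\<psi>\<close>. The trial vector
  equal to \<open>\<psi>\<close> left of \<open>B_l\<close>, to \<open>-\<psi>\<close> right of it and 0 at \<open>B_l\<close> is orthogonal to \<open>\<psi>\<close> by mirror
  symmetry, and only the two edges at \<open>B_l\<close> contribute to its energy, which is \<open>2 (2/3)^(2l-3)\<close>
  against a squared norm of at least 4. By the variational principle (proved with the power method)
  some non-zero eigenvalue, hence the gap, lies below \<open>2 (2/3)^(2l-1)\<close>.\<close>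

section \<open>Complex vectors and the power method\<close>

definition cinner :: "nat \<Rightarrow> complex vec \<Rightarrow> complex vec \<Rightarrow> complex" where
  "cinner n u v = (\<Sum>i<n. cnj (u $ i) * v $ i)"

definition sqnorm :: "nat \<Rightarrow> complex vec \<Rightarrow> real" where
  "sqnorm n u = (\<Sum>i<n. (cmod (u $ i))\<^sup>2)"

definition hermitian :: "nat \<Rightarrow> complex mat \<Rightarrow> bool" where
  "hermitian n A \<longleftrightarrow> A \<in> carrier_mat n n \<and> (\<forall>i<n. \<forall>j<n. A $$ (i, j) = cnj (A $$ (j, i)))"

lemma cinner_self: "cinner n u u = of_real (sqnorm n u)"
  unfolding cinner_def sqnorm_def of_real_sum
  by (intro sum.cong refl) (simp add: complex_norm_square mult.commute del: of_real_power)

lemma sqnorm_nonneg: "0 \<le> sqnorm n u"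
  unfolding sqnorm_def by (intro sum_nonneg) auto

lemma sqnorm_pos:
  assumes "v \<in> carrier_vec n" "v \<noteq> 0\<^sub>v n"
  shows "0 < sqnorm n v"
proof -
  from assms obtain i where "i < n" "v $ i \<noteq> 0"
    by (metis carrier_vecD eq_vecI index_zero_vec)
  then show ?thesis
    unfolding sqnorm_def by (intro sum_pos2[of "{..<n}" i]) auto
qed

lemma cinner_Cauchy_Schwarz: "(cmod (cinner n u v))\<^sup>2 \<le> sqnorm n u * sqnorm n v"
proof -
  let ?u = "\<lambda>i. cmod (u $ i)" and ?v = "\<lambda>i. cmod (v $ i)"
  have "cmod (cinner n u v) \<le> (\<Sum>i<n. \<bar>?u i\<bar> * \<bar>?v i\<bar>)"
    unfolding cinner_def by (rule order.trans[OF norm_sum]) (simp add: norm_mult)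
  also have "\<dots> \<le> L2_set ?u {..<n} * L2_set ?v {..<n}"
    by (rule L2_set_mult_ineq)
  finally have "(cmod (cinner n u v))\<^sup>2 \<le> (L2_set ?u {..<n} * L2_set ?v {..<n})\<^sup>2"
    by (intro power_mono) auto
  also have "\<dots> = sqnorm n u * sqnorm n v"
    unfolding power_mult_distrib L2_set_def sqnorm_def by (simp add: sum_nonneg)
  finally show ?thesis .
qed

lemma mult_mat_vec_index_sum:
  assumes "A \<in> carrier_mat n n" "v \<in> carrier_vec n" "i < n"
  shows "(A *\<^sub>v v) $ i = (\<Sum>j<n. A $$ (i, j) * v $ j)"
  using assms by (auto simp: scalar_prod_def row_def lessThan_atLeast0 intro!: sum.cong)

lemma hermitian_cinner:
  assumes "hermitian n A" and u: "u \<in> carrier_vec n" and v: "v \<in> carrier_vec n"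
  shows "cinner n u (A *\<^sub>v v) = cinner n (A *\<^sub>v u) v"
proof -
  have A: "A \<in> carrier_mat n n"
    using assms(1) unfolding hermitian_def by blast
  have herm: "cnj (A $$ (j, i)) = A $$ (i, j)" if "i < n" "j < n" for i j
    using assms(1) that unfolding hermitian_def by (metis complex_cnj_cnj)
  have "cinner n u (A *\<^sub>v v) = (\<Sum>i<n. \<Sum>j<n. cnj (u $ i) * A $$ (i, j) * v $ j)"
    unfolding cinner_def using A v
    by (intro sum.cong refl) (simp add: mult_mat_vec_index_sum sum_distrib_left mult.assoc del: index_mult_mat_vec)
  also have "\<dots> = (\<Sum>j<n. \<Sum>i<n. cnj (u $ i) * A $$ (i, j) * v $ j)"
    by (rule sum.swap)
  also have "\<dots> = (\<Sum>j<n. cnj (\<Sum>i<n. A $$ (j, i) * u $ i) * v $ j)"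
    by (intro sum.cong refl) (simp add: sum_distrib_left sum_distrib_right herm mult.commute mult.left_commute)
  also have "\<dots> = cinner n (A *\<^sub>v u) v"
    unfolding cinner_def using A u
    by (intro sum.cong refl) (simp add: mult_mat_vec_index_sum del: index_mult_mat_vec)
  finally show ?thesis .
qed

lemma sqnorm_mult_mat_vec_le:
  assumes A: "A \<in> carrier_mat n n" and v: "v \<in> carrier_vec n" and "norm_bound A C"
  shows "sqnorm n (A *\<^sub>v v) \<le> real n * (C * (\<Sum>j<n. cmod (v $ j)))\<^sup>2"
proof -
  have entry: "cmod ((A *\<^sub>v v) $ i) \<le> C * (\<Sum>j<n. cmod (v $ j))" if i: "i < n" for i
  proof -
    have "cmod ((A *\<^sub>v v) $ i) \<le> (\<Sum>j<n. cmod (A $$ (i, j)) * cmod (v $ j))"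
      unfolding mult_mat_vec_index_sum[OF A v i] by (rule order.trans[OF norm_sum]) (simp add: norm_mult)
    also have "\<dots> \<le> (\<Sum>j<n. C * cmod (v $ j))"
      using assms(3) A i unfolding norm_bound_def by (intro sum_mono mult_right_mono) auto
    finally show ?thesis by (simp add: sum_distrib_left)
  qed
  have "sqnorm n (A *\<^sub>v v) \<le> (\<Sum>i<n. (C * (\<Sum>j<n. cmod (v $ j)))\<^sup>2)"
    unfolding sqnorm_def using entry by (intro sum_mono power_mono) auto
  then show ?thesis by simp
qed

lemma log_convex_geometric_growth:
  fixes a :: "nat \<Rightarrow> real"
  assumes log_convex: "\<And>k. (a (Suc k))\<^sup>2 \<le> a k * a (Suc (Suc k))"
    and "0 < a 0" "0 < r" "r * a 0 \<le> a 1"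
  shows "r ^ k * a 0 \<le> a k"
proof -
  have step: "0 < a k \<and> r * a k \<le> a (Suc k)" for k
  proof (induction k)
    case 0
    then show ?case using assms by simp
  next
    case (Suc k)
    then have pos: "0 < a (Suc k)"
      using \<open>0 < r\<close> by (smt (verit) mult_pos_pos)
    have "a k * (r * a (Suc k)) \<le> a (Suc k) * a (Suc k)"
      using Suc pos by (simp add: mult.left_commute mult_right_mono)
    also have "\<dots> \<le> a k * a (Suc (Suc k))"
      using log_convex[of k] by (simp add: power2_eq_square)
    finally show ?case
      using Suc pos by (simp add: mult_le_cancel_left_pos)
  qed
  show ?thesis
  proof (induction k)
    case (Suc k)
    have "r ^ Suc k * a 0 = r * (r ^ k * a 0)" by simp
    also have "\<dots> \<le> r * a k" using Suc \<open>0 < r\<close> by (intro mult_left_mono) auto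
    also have "\<dots> \<le> a (Suc k)" using step[of k] by simp
    finally show ?case .
  qed simp
qed

lemma pow_mat_Suc_left:
  assumes "A \<in> carrier_mat n n"
  shows "A ^\<^sub>m Suc k = A * A ^\<^sub>m k"
proof (induction k)
  case (Suc k)
  have "A ^\<^sub>m Suc (Suc k) = (A * A ^\<^sub>m k) * A" using Suc by simp
  also have "\<dots> = A * (A ^\<^sub>m k * A)" using assms by (intro assoc_mult_mat) auto
  finally show ?case by simp
qed (use assms in simp)

lemma hermitian_sqnorm_mult_vec_sq_le:
  assumes herm: "hermitian n N" and v: "v \<in> carrier_vec n"
  shows "(sqnorm n (N *\<^sub>v v))\<^sup>2 \<le> sqnorm n v * sqnorm n (N *\<^sub>v (N *\<^sub>v v))"
proof -
  have N: "N \<in> carrier_mat n n" using herm unfolding hermitian_def by simp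
  have "of_real (sqnorm n (N *\<^sub>v v)) = cinner n (N *\<^sub>v v) (N *\<^sub>v v)"
    unfolding cinner_self ..
  also have "\<dots> = cinner n v (N *\<^sub>v (N *\<^sub>v v))"
    by (rule hermitian_cinner[symmetric, OF herm]) (use N v in auto)
  finally have "sqnorm n (N *\<^sub>v v) = cmod (cinner n v (N *\<^sub>v (N *\<^sub>v v)))"
    by (metis norm_of_real sqnorm_nonneg abs_of_nonneg)
  then show ?thesis by (simp add: cinner_Cauchy_Schwarz)
qed

lemma spectral_radius_lt_1_iterates_bounded:
  assumes N: "N \<in> carrier_mat n n" and "spectral_radius N < 1" and v: "v \<in> carrier_vec n"
  shows "\<exists>B. \<forall>k. sqnorm n ((N ^\<^sub>m k) *\<^sub>v v) \<le> B"
proof -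
  obtain C where "\<And>k. norm_bound (N ^\<^sub>m k) C"
    using spectral_radius_jnf_norm_bound_less_1_upper_triangular[OF assms(1,2)] by auto
  then have "sqnorm n ((N ^\<^sub>m k) *\<^sub>v v) \<le> real n * (C * (\<Sum>j<n. cmod (v $ j)))\<^sup>2" for k
    using N v by (intro sqnorm_mult_mat_vec_le) auto
  then show ?thesis by blast
qed

text \<open>Power method: the squared norms of the iterates of a Hermitian matrix are log-convex, so a
  Rayleigh quotient above 1 would make them grow geometrically, which a spectral radius below 1 forbids.\<close>

lemma hermitian_Rayleigh_le_sqnorm:
  assumes herm: "hermitian n N" and sr: "spectral_radius N < 1" and \<phi>: "\<phi> \<in> carrier_vec n"
  shows "Re (cinner n \<phi> (N *\<^sub>v \<phi>)) \<le> sqnorm n \<phi>"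
proof (rule ccontr)
  assume "\<not> ?thesis"
  then have gt: "sqnorm n \<phi> < Re (cinner n \<phi> (N *\<^sub>v \<phi>))" by simp
  have N: "N \<in> carrier_mat n n" using herm unfolding hermitian_def by simp
  define u where "u k = (N ^\<^sub>m k) *\<^sub>v \<phi>" for k
  define a where "a k = sqnorm n (u k)" for k
  have u_carrier: "u k \<in> carrier_vec n" for k
    unfolding u_def using N \<phi> by (metis mult_mat_vec_carrier pow_carrier_mat)
  have u0: "u 0 = \<phi>"
    unfolding u_def using N \<phi> by simp
  have u_Suc: "u (Suc k) = N *\<^sub>v u k" for k
    unfolding u_def pow_mat_Suc_left[OF N] using N \<phi> by (intro assoc_mult_mat_vec) auto
  have "0 < a 0"
  proof (rule ccontr)
    assume "\<not> 0 < a 0"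
    then have "sqnorm n \<phi> = 0" using sqnorm_nonneg u0 unfolding a_def by (metis order.not_eq_order_implies_strict)
    then have "cmod (cinner n \<phi> (N *\<^sub>v \<phi>)) = 0" using cinner_Cauchy_Schwarz[of n \<phi> "N *\<^sub>v \<phi>"] by simp
    with gt show False using sqnorm_nonneg[of n \<phi>] by simp
  qed
  define \<rho> where "\<rho> = Re (cinner n \<phi> (N *\<^sub>v \<phi>)) / a 0"
  have "1 < \<rho>" unfolding \<rho>_def using gt \<open>0 < a 0\<close> u0 by (simp add: a_def)
  have log_convex: "(a (Suc k))\<^sup>2 \<le> a k * a (Suc (Suc k))" for k
    unfolding a_def u_Suc by (rule hermitian_sqnorm_mult_vec_sq_le[OF herm u_carrier])
  have "(\<rho> * a 0)\<^sup>2 \<le> (cmod (cinner n (u 0) (u 1)))\<^sup>2"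
    using \<open>1 < \<rho>\<close> \<open>0 < a 0\<close> u0 u_Suc[of 0] complex_Re_le_cmod
    by (intro power_mono) (auto simp: \<rho>_def)
  also have "\<dots> \<le> a 0 * a 1" unfolding a_def by (rule cinner_Cauchy_Schwarz)
  finally have first: "\<rho>\<^sup>2 * a 0 \<le> a 1"
    using \<open>0 < a 0\<close> by (simp add: power2_eq_square mult_le_cancel_right_pos)
  have growth: "(\<rho>\<^sup>2) ^ k * a 0 \<le> a k" for k
    using log_convex_geometric_growth[OF log_convex \<open>0 < a 0\<close> _ first] \<open>1 < \<rho>\<close> by simp
  obtain B where bounded: "\<And>k. a k \<le> B"
    unfolding a_def u_def using spectral_radius_lt_1_iterates_bounded[OF N sr \<phi>] by blast
  have "1 < \<rho>\<^sup>2" using \<open>1 < \<rho>\<close> by (simp add: one_less_power)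
  then obtain k where "B / a 0 < (\<rho>\<^sup>2) ^ k" using real_arch_pow by blast
  then have "B < (\<rho>\<^sup>2) ^ k * a 0" using \<open>0 < a 0\<close> by (simp add: divide_less_eq)
  with growth[of k] bounded[of k] show False by simp
qed

lemma spectral_gap_less:
  assumes A: "A \<in> carrier_mat n n"
    and nonneg: "\<And>z. eigenvalue A z \<Longrightarrow> 0 \<le> Re z"
    and "eigenvalue A 0"
    and \<mu>: "eigenvalue A \<mu>" "0 < Re \<mu>" "Re \<mu> < b"
  shows "spectral_gap A < b"
proof -
  define xs where "xs = sorted_eigenvalues A"
  have "char_poly A \<noteq> 0" using degree_monic_char_poly[OF A] by auto
  then have set_xs: "set xs = Re ` {z. eigenvalue A z}"
    unfolding xs_def sorted_eigenvalues_def by (simp add: eigenvalue_root_char_poly[OF A])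
  have sorted: "sorted xs" unfolding xs_def sorted_eigenvalues_def by simp
  obtain k0 where k0: "k0 < length xs" "xs ! k0 = 0"
    using \<open>eigenvalue A 0\<close> set_xs by (metis (mono_tags) image_eqI in_set_conv_nth mem_Collect_eq zero_complex.simps(1))
  have "0 \<le> xs ! 0"
    using k0 set_xs nonneg by (metis (mono_tags) gr_zeroI imageE less_nat_zero_code mem_Collect_eq nth_mem)
  moreover have "xs ! 0 \<le> xs ! k0"
    using sorted k0 by (intro sorted_nth_mono) auto
  ultimately have x0: "xs ! 0 = 0" using k0 by simp
  obtain k where k: "k < length xs" "xs ! k = Re \<mu>"
    using \<mu>(1) set_xs by (metis (mono_tags) image_eqI in_set_conv_nth mem_Collect_eq)
  then have "k \<noteq> 0" using x0 \<mu>(2) by (metis less_irrefl)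
  then have "xs ! 1 \<le> xs ! k" using sorted k by (intro sorted_nth_mono) auto
  then show ?thesis unfolding spectral_gap_def xs_def[symmetric] using x0 k \<mu>(3) by simp
qed

section \<open>Ground state representation and a variational bound\<close>

definition hamiltonian_entry :: "nat \<Rightarrow> (nat \<Rightarrow> nat \<Rightarrow> bool) \<Rightarrow> (nat \<Rightarrow> real) \<Rightarrow> nat \<Rightarrow> nat \<Rightarrow> real" where
  "hamiltonian_entry n E W i j =
     (if i = j then real (degree_of n E i) + W i else 0) - (if E i j then 1 else 0)"

lemma hamiltonian_carrier: "hamiltonian n E W \<in> carrier_mat n n"
  unfolding hamiltonian_def laplacian_def by auto

lemma hamiltonian_index:
  "i < n \<Longrightarrow> j < n \<Longrightarrow> hamiltonian n E W $$ (i, j) = of_real (hamiltonian_entry n E W i j)"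
  unfolding hamiltonian_def laplacian_def hamiltonian_entry_def by auto

lemma hamiltonian_mult_vec:
  "v \<in> carrier_vec n \<Longrightarrow> i < n \<Longrightarrow>
    (hamiltonian n E W *\<^sub>v v) $ i = (\<Sum>j<n. of_real (hamiltonian_entry n E W i j) * v $ j)"
  by (simp add: mult_mat_vec_index_sum[OF hamiltonian_carrier] hamiltonian_index)

lemma hamiltonian_diagonal_bounded:
  "\<exists>K \<ge> 0. \<forall>x<n. real (degree_of n E x) + W x \<le> K"
proof -
  define K where "K = (\<Sum>y<n. \<bar>real (degree_of n E y) + W y\<bar>)"
  have "real (degree_of n E x) + W x \<le> K" if "x < n" for x
  proof -
    have "real (degree_of n E x) + W x \<le> \<bar>real (degree_of n E x) + W x\<bar>"
      by (rule abs_ge_self)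
    also have "\<dots> \<le> K"
      unfolding K_def using that by (intro member_le_sum) auto
    finally show ?thesis .
  qed
  moreover have "0 \<le> K"
    unfolding K_def by (simp add: sum_nonneg)
  ultimately show ?thesis by blast
qed

definition graph_connected :: "nat \<Rightarrow> (nat \<Rightarrow> nat \<Rightarrow> bool) \<Rightarrow> bool" where
  "graph_connected n E \<longleftrightarrow> (\<forall>x<n. (\<lambda>a b. a < n \<and> b < n \<and> E a b)\<^sup>*\<^sup>* 0 x)"

lemma graph_connected_constant:
  assumes "graph_connected n E" and f: "\<And>x y. x < n \<Longrightarrow> y < n \<Longrightarrow> E x y \<Longrightarrow> f x = f y"
    and "x < n"
  shows "f x = f 0"
proof -
  have "(\<lambda>a b. a < n \<and> b < n \<and> E a b)\<^sup>*\<^sup>* 0 x"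
    using assms(1,3) unfolding graph_connected_def by blast
  then show ?thesis
    by (induction rule: rtranclp_induct) (auto dest: f)
qed

lemma weighted_sq_diff_expand:
  fixes p q :: real and a b :: complex
  assumes "0 < p" "0 < q"
  shows "of_real (p * q * (cmod (a / of_real p - b / of_real q))\<^sup>2)
    = of_real (q / p) * (cnj a * a) + of_real (p / q) * (cnj b * b) - cnj a * b - cnj b * a"
proof -
  have "of_real (p * q * (cmod (a / of_real p - b / of_real q))\<^sup>2)
      = of_real p * of_real q * ((a / of_real p - b / of_real q) * (cnj a / of_real p - cnj b / of_real q))"
    by (simp add: complex_norm_square del: of_real_power)
  also have "\<dots> = of_real (q / p) * (cnj a * a) + of_real (p / q) * (cnj b * b) - cnj a * b - cnj b * a"
    using assms by (simp add: field_simps)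
  finally show ?thesis .
qed

locale ground_state =
  fixes n :: nat and E :: "nat \<Rightarrow> nat \<Rightarrow> bool" and W :: "nat \<Rightarrow> real" and \<psi> :: "nat \<Rightarrow> real"
  assumes adj_sym: "\<And>x y. E x y = E y x"
    and ground_state_pos: "\<And>x. x < n \<Longrightarrow> 0 < \<psi> x"
    and ground_state_eq: "\<And>x. x < n \<Longrightarrow>
      (real (degree_of n E x) + W x) * \<psi> x = (\<Sum>y<n. if E x y then \<psi> y else 0)"
begin

abbreviation "H \<equiv> hamiltonian n E W"

definition dirichlet_term :: "complex vec \<Rightarrow> nat \<Rightarrow> nat \<Rightarrow> real" where
  "dirichlet_term v x y =
     (if E x y then \<psi> x * \<psi> y * (cmod (v $ x / of_real (\<psi> x) - v $ y / of_real (\<psi> y)))\<^sup>2 / 2 else 0)"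

definition dirichlet_form :: "complex vec \<Rightarrow> real" where
  "dirichlet_form v = (\<Sum>x<n. \<Sum>y<n. dirichlet_term v x y)"

definition overlap :: "complex vec \<Rightarrow> complex" where
  "overlap v = (\<Sum>j<n. of_real (\<psi> j) * v $ j)"

definition ground_state_sqnorm :: real where
  "ground_state_sqnorm = (\<Sum>k<n. (\<psi> k)\<^sup>2)"

lemma ground_state_sqnorm_pos:
  assumes "0 < n"
  shows "0 < ground_state_sqnorm"
proof -
  have "0 < \<psi> 0" using assms by (rule ground_state_pos)
  then show ?thesis
    unfolding ground_state_sqnorm_def using assms by (intro sum_pos2[of _ 0]) auto
qed

lemma dirichlet_term_nonneg: "x < n \<Longrightarrow> y < n \<Longrightarrow> 0 \<le> dirichlet_term v x y"
  unfolding dirichlet_term_def using ground_state_pos[of x] ground_state_pos[of y] by simp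

lemma dirichlet_form_nonneg: "0 \<le> dirichlet_form v"
  unfolding dirichlet_form_def by (intro sum_nonneg) (simp add: dirichlet_term_nonneg)

lemma diagonal_eq:
  assumes x: "x < n"
  shows "real (degree_of n E x) + W x = (\<Sum>y<n. if E x y then \<psi> y / \<psi> x else 0)"
proof -
  have "real (degree_of n E x) + W x = (\<Sum>y<n. if E x y then \<psi> y else 0) / \<psi> x"
    using ground_state_eq[OF x] ground_state_pos[OF x] by (simp add: field_simps)
  also have "\<dots> = (\<Sum>y<n. if E x y then \<psi> y / \<psi> x else 0)"
    by (simp add: sum_divide_distrib) (intro sum.cong refl, simp)
  finally show ?thesis .
qed

lemma quadratic_form_eq:
  assumes v: "v \<in> carrier_vec n"
  shows "cinner n v (H *\<^sub>v v) = of_real (dirichlet_form v)"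
proof -
  define T where "T x y = (if E x y then of_real (\<psi> y / \<psi> x) * (cnj (v $ x) * v $ x) - cnj (v $ x) * v $ y else 0)" for x y
  have row: "cnj (v $ x) * (H *\<^sub>v v) $ x = (\<Sum>y<n. T x y)" if x: "x < n" for x
  proof -
    have "(H *\<^sub>v v) $ x = (\<Sum>y<n. (if x = y then of_real (real (degree_of n E x) + W x) * v $ y else 0)
        - (if E x y then v $ y else 0))"
      unfolding hamiltonian_mult_vec[OF v x]
      by (intro sum.cong refl) (simp add: hamiltonian_entry_def algebra_simps)
    also have "\<dots> = of_real (real (degree_of n E x) + W x) * v $ x - (\<Sum>y<n. if E x y then v $ y else 0)"
      using x by (simp add: sum_subtractf)
    also have "of_real (real (degree_of n E x) + W x) = (\<Sum>y<n. if E x y then of_real (\<psi> y / \<psi> x) else 0 :: complex)"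
      unfolding diagonal_eq[OF x] of_real_sum by (simp add: if_distrib cong: if_cong)
    finally show ?thesis unfolding T_def
      by (simp add: sum_distrib_left sum_distrib_right sum_subtractf[symmetric] algebra_simps if_distrib cong: if_cong)
  qed
  have "cinner n v (H *\<^sub>v v) = (\<Sum>x<n. \<Sum>y<n. T x y)"
    unfolding cinner_def using row by simp
  also have "\<dots> = (\<Sum>x<n. \<Sum>y<n. (T x y + T y x) / 2)"
    using sum.swap[of T "{..<n}" "{..<n}"]
    by (simp add: sum.distrib sum_divide_distrib[symmetric] add_divide_distrib)
  also have "\<dots> = of_real (dirichlet_form v)"
    unfolding dirichlet_form_def of_real_sum
  proof (intro sum.cong refl)
    fix x y assume "x \<in> {..<n}" "y \<in> {..<n}"
    then have pos: "0 < \<psi> x" "0 < \<psi> y" by (simp_all add: ground_state_pos)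
    show "(T x y + T y x) / 2 = of_real (dirichlet_term v x y)"
    proof (cases "E x y")
      case True
      have "of_real (\<psi> x * \<psi> y * (cmod (v $ x / of_real (\<psi> x) - v $ y / of_real (\<psi> y)))\<^sup>2) = T x y + T y x"
        unfolding weighted_sq_diff_expand[OF pos] T_def using True adj_sym[of x y] by (simp add: algebra_simps)
      then show ?thesis
        using True unfolding dirichlet_term_def by (simp del: of_real_power of_real_mult)
    qed (use adj_sym[of x y] in \<open>simp add: T_def dirichlet_term_def\<close>)
  qed
  finally show ?thesis .
qed

lemma hamiltonian_entry_sym: "hamiltonian_entry n E W i j = hamiltonian_entry n E W j i"
  unfolding hamiltonian_entry_def using adj_sym[of i j] by auto

lemma hamiltonian_entry_ground_state:
  assumes x: "x < n"
  shows "(\<Sum>i<n. hamiltonian_entry n E W x i * \<psi> i) = 0"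
proof -
  have "(\<Sum>i<n. hamiltonian_entry n E W x i * \<psi> i)
      = (\<Sum>i<n. (if x = i then (real (degree_of n E x) + W x) * \<psi> i else 0) - (if E x i then \<psi> i else 0))"
    by (intro sum.cong refl) (simp add: hamiltonian_entry_def algebra_simps)
  also have "\<dots> = (real (degree_of n E x) + W x) * \<psi> x - (\<Sum>i<n. if E x i then \<psi> i else 0)"
    unfolding sum_subtractf using x by simp
  finally show ?thesis using ground_state_eq[OF x] by simp
qed

lemma overlap_hamiltonian:
  assumes v: "v \<in> carrier_vec n"
  shows "overlap (H *\<^sub>v v) = 0"
proof -
  have "overlap (H *\<^sub>v v) = (\<Sum>i<n. \<Sum>j<n. of_real (\<psi> i * hamiltonian_entry n E W i j) * v $ j)"
    unfolding overlap_def using v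
    by (intro sum.cong refl) (simp add: hamiltonian_mult_vec sum_distrib_left mult.assoc)
  also have "\<dots> = (\<Sum>j<n. \<Sum>i<n. of_real (\<psi> i * hamiltonian_entry n E W i j) * v $ j)"
    by (rule sum.swap)
  also have "\<dots> = (\<Sum>j<n. of_real (\<Sum>i<n. \<psi> i * hamiltonian_entry n E W i j) * v $ j)"
    by (simp add: of_real_sum sum_distrib_right del: of_real_mult)
  also have "\<dots> = (\<Sum>j<n. of_real (\<Sum>i<n. hamiltonian_entry n E W j i * \<psi> i) * v $ j)"
  proof (intro sum.cong refl)
    fix j
    have "(\<Sum>i<n. \<psi> i * hamiltonian_entry n E W i j) = (\<Sum>i<n. hamiltonian_entry n E W j i * \<psi> i)"
      by (intro sum.cong refl) (metis hamiltonian_entry_sym mult.commute)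
    then show "of_real (\<Sum>i<n. \<psi> i * hamiltonian_entry n E W i j) * v $ j
        = of_real (\<Sum>i<n. hamiltonian_entry n E W j i * \<psi> i) * v $ j" by simp
  qed
  also have "\<dots> = 0"
    by (simp add: hamiltonian_entry_ground_state)
  finally show ?thesis .
qed

definition ground_state_vec :: "complex vec" where
  "ground_state_vec = vec n (\<lambda>i. of_real (\<psi> i))"

lemma eigenvalue_0:
  assumes "0 < n"
  shows "eigenvalue H 0"
proof -
  have gs: "ground_state_vec \<in> carrier_vec n"
    by (simp add: ground_state_vec_def)
  have "H *\<^sub>v ground_state_vec = 0 \<cdot>\<^sub>v ground_state_vec"
  proof (rule eq_vecI)
    fix i assume "i < dim_vec (0 \<cdot>\<^sub>v ground_state_vec)"
    then have i: "i < n" by (simp add: ground_state_vec_def)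
    have "(H *\<^sub>v ground_state_vec) $ i = of_real (\<Sum>j<n. hamiltonian_entry n E W i j * \<psi> j)"
      unfolding hamiltonian_mult_vec[OF gs i] of_real_sum
      by (intro sum.cong refl) (auto simp: ground_state_vec_def)
    then show "(H *\<^sub>v ground_state_vec) $ i = (0 \<cdot>\<^sub>v ground_state_vec) $ i"
      using i by (simp add: hamiltonian_entry_ground_state ground_state_vec_def)
  qed (simp add: ground_state_vec_def hamiltonian_carrier[THEN carrier_matD(1)])
  moreover have "ground_state_vec \<noteq> 0\<^sub>v n"
  proof
    assume "ground_state_vec = 0\<^sub>v n"
    then have "\<psi> 0 = 0" using assms by (metis ground_state_vec_def index_vec index_zero_vec(1) of_real_eq_0_iff)
    with ground_state_pos[OF assms] show False by simp
  qed
  ultimately show ?thesis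
    unfolding eigenvalue_def eigenvector_def hamiltonian_carrier[THEN carrier_matD(1)]
    using hamiltonian_carrier[of n E W] gs by blast
qed

lemma eigenvector_Rayleigh:
  assumes "eigenvector H v \<mu>"
  shows "\<mu> = of_real (dirichlet_form v / sqnorm n v)"
proof -
  from assms have v: "v \<in> carrier_vec n" and "v \<noteq> 0\<^sub>v n" and Hv: "H *\<^sub>v v = \<mu> \<cdot>\<^sub>v v"
    unfolding eigenvector_def using hamiltonian_carrier[of n E W] by auto
  then have pos: "0 < sqnorm n v" by (intro sqnorm_pos)
  have "of_real (dirichlet_form v) = cinner n v (\<mu> \<cdot>\<^sub>v v)"
    unfolding quadratic_form_eq[OF v, symmetric] Hv ..
  also have "\<dots> = \<mu> * of_real (sqnorm n v)"
    unfolding cinner_self[symmetric] cinner_def using v by (simp add: sum_distrib_left algebra_simps)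
  finally show ?thesis using pos by (simp add: field_simps)
qed

lemma eigenvalue_real_nonneg:
  assumes "eigenvalue H \<mu>"
  shows "\<mu> = of_real (Re \<mu>)" "0 \<le> Re \<mu>"
proof -
  obtain v where "eigenvector H v \<mu>" using assms unfolding eigenvalue_def by blast
  from eigenvector_Rayleigh[OF this] show "\<mu> = of_real (Re \<mu>)" "0 \<le> Re \<mu>"
    using dirichlet_form_nonneg[of v] sqnorm_nonneg[of n v] by simp_all
qed

lemma dirichlet_form_eq_0_edge:
  assumes "dirichlet_form v = 0" "x < n" "y < n" "E x y"
  shows "v $ x / of_real (\<psi> x) = v $ y / of_real (\<psi> y)"
proof -
  have row_nonneg: "0 \<le> (\<Sum>y<n. dirichlet_term v x' y)" if "x' \<in> {..<n}" for x'
    using that by (intro sum_nonneg dirichlet_term_nonneg) auto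
  have "(\<Sum>y<n. dirichlet_term v x y) = 0"
    using assms(1,2) sum_nonneg_eq_0_iff[of "{..<n}" "\<lambda>x. \<Sum>y<n. dirichlet_term v x y"] row_nonneg
    unfolding dirichlet_form_def by auto
  then have "dirichlet_term v x y = 0"
    using assms(2,3) sum_nonneg_eq_0_iff[of "{..<n}" "dirichlet_term v x"] dirichlet_term_nonneg by auto
  then show ?thesis
    using assms ground_state_pos[of x] ground_state_pos[of y] by (simp add: dirichlet_term_def)
qed

text \<open>On a connected graph the form vanishes only on multiples of \<open>\<psi>\<close>.\<close>

lemma dirichlet_form_pos:
  assumes conn: "graph_connected n E"
    and v: "v \<in> carrier_vec n" "v \<noteq> 0\<^sub>v n" and "overlap v = 0"
  shows "0 < dirichlet_form v"
proof (rule ccontr)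
  assume "\<not> 0 < dirichlet_form v"
  then have zero: "dirichlet_form v = 0"
    using dirichlet_form_nonneg[of v] by simp
  define a where "a = v $ 0 / of_real (\<psi> 0)"
  have v_eq: "v $ x = a * of_real (\<psi> x)" if x: "x < n" for x
  proof -
    have "v $ x / of_real (\<psi> x) = a"
      unfolding a_def using dirichlet_form_eq_0_edge[OF zero] x
      by (intro graph_connected_constant[OF conn]) auto
    then show ?thesis using ground_state_pos[OF x] by (simp add: field_simps)
  qed
  have "0 < n"
    using sqnorm_pos[OF v] unfolding sqnorm_def by (cases n) auto
  then have "0 < ground_state_sqnorm"
    by (rule ground_state_sqnorm_pos)
  moreover have "overlap v = a * of_real ground_state_sqnorm"
    unfolding overlap_def ground_state_sqnorm_def of_real_sum sum_distrib_left
    by (intro sum.cong refl) (simp add: v_eq power2_eq_square)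
  ultimately have "a = 0"
    using \<open>overlap v = 0\<close> by (metis mult_eq_0_iff of_real_eq_0_iff order.irrefl)
  then have "v = 0\<^sub>v n"
    using v(1) by (intro eq_vecI) (auto simp: v_eq)
  with v(2) show False ..
qed

lemma dirichlet_term_le:
  assumes "x < n" "y < n"
  shows "dirichlet_term v x y \<le> (if E x y then \<psi> y / \<psi> x * (cmod (v $ x))\<^sup>2 else 0)
    + (if E y x then \<psi> x / \<psi> y * (cmod (v $ y))\<^sup>2 else 0)"
proof (cases "E x y")
  case True
  have px: "0 < \<psi> x" and py: "0 < \<psi> y" using ground_state_pos assms by auto
  let ?a = "cmod (v $ x) / \<psi> x" and ?b = "cmod (v $ y) / \<psi> y"
  have "cmod (v $ x / of_real (\<psi> x) - v $ y / of_real (\<psi> y)) \<le> ?a + ?b"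
    using norm_triangle_ineq4[of "v $ x / of_real (\<psi> x)" "v $ y / of_real (\<psi> y)"] px py
    by (simp add: norm_divide)
  then have "(cmod (v $ x / of_real (\<psi> x) - v $ y / of_real (\<psi> y)))\<^sup>2 \<le> (?a + ?b)\<^sup>2"
    by (intro power_mono) auto
  also have "\<dots> \<le> 2 * ?a\<^sup>2 + 2 * ?b\<^sup>2"
    using sum_squares_bound[of ?a ?b] by (simp add: power2_sum)
  finally have sq: "(cmod (v $ x / of_real (\<psi> x) - v $ y / of_real (\<psi> y)))\<^sup>2 \<le> 2 * ?a\<^sup>2 + 2 * ?b\<^sup>2" .
  have "dirichlet_term v x y = \<psi> x * \<psi> y * (cmod (v $ x / of_real (\<psi> x) - v $ y / of_real (\<psi> y)))\<^sup>2 / 2"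
    using True by (simp add: dirichlet_term_def)
  also have "\<dots> \<le> \<psi> x * \<psi> y * (2 * ?a\<^sup>2 + 2 * ?b\<^sup>2) / 2"
    using sq px py by (intro divide_right_mono mult_left_mono) auto
  also have "\<dots> = \<psi> y / \<psi> x * (cmod (v $ x))\<^sup>2 + \<psi> x / \<psi> y * (cmod (v $ y))\<^sup>2"
    using px py by (simp add: power2_eq_square field_simps)
  finally show ?thesis using True adj_sym[of x y] by simp
qed (simp add: dirichlet_term_def adj_sym[of x y])

lemma dirichlet_form_le:
  assumes K: "\<And>x. x < n \<Longrightarrow> real (degree_of n E x) + W x \<le> K"
  shows "dirichlet_form v \<le> 2 * K * sqnorm n v"
proof -
  define U where "U x y = (if E x y then \<psi> y / \<psi> x * (cmod (v $ x))\<^sup>2 else 0)" for x y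
  have "dirichlet_form v \<le> (\<Sum>x<n. \<Sum>y<n. U x y + U y x)"
    unfolding dirichlet_form_def U_def by (intro sum_mono) (simp add: dirichlet_term_le)
  also have "\<dots> = 2 * (\<Sum>x<n. \<Sum>y<n. U x y)"
    using sum.swap[of U "{..<n}" "{..<n}"] by (simp add: sum.distrib)
  also have "(\<Sum>x<n. \<Sum>y<n. U x y) = (\<Sum>x<n. (real (degree_of n E x) + W x) * (cmod (v $ x))\<^sup>2)"
  proof (intro sum.cong refl)
    fix x assume "x \<in> {..<n}"
    then have x: "x < n" by simp
    have "(\<Sum>y<n. U x y) = (\<Sum>y<n. if E x y then \<psi> y else 0) / \<psi> x * (cmod (v $ x))\<^sup>2"
      unfolding U_def by (simp add: sum_divide_distrib sum_distrib_right) (intro sum.cong refl, simp)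
    also have "\<dots> = (real (degree_of n E x) + W x) * (cmod (v $ x))\<^sup>2"
      unfolding ground_state_eq[OF x, symmetric] using ground_state_pos[OF x] by simp
    finally show "(\<Sum>y<n. U x y) = (real (degree_of n E x) + W x) * (cmod (v $ x))\<^sup>2" .
  qed
  also have "\<dots> \<le> (\<Sum>x<n. K * (cmod (v $ x))\<^sup>2)"
    using K by (intro sum_mono mult_right_mono) auto
  finally show ?thesis
    unfolding sqnorm_def by (simp add: sum_distrib_left mult.assoc)
qed

text \<open>\<open>(I - H / c - P) / q\<close>, with \<open>P\<close> the orthogonal projection onto \<open>\<psi>\<close>: projecting out the
  ground state leaves the eigenvalues \<open>(1 - \<mu> / c) / q\<close> for the other eigenvalues \<open>\<mu>\<close> of \<open>H\<close>.\<close>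

definition deflation :: "real \<Rightarrow> real \<Rightarrow> complex mat" where
  "deflation c q = mat n n (\<lambda>(i, j). ((if i = j then 1 else 0) - H $$ (i, j) / of_real c
     - of_real (\<psi> i * \<psi> j / ground_state_sqnorm)) / of_real q)"

lemma hermitian_deflation: "hermitian n (deflation c q)"
  unfolding hermitian_def deflation_def
  by (simp add: hamiltonian_index hamiltonian_entry_sym mult.commute)

lemma deflation_mult_vec:
  assumes v: "v \<in> carrier_vec n" and i: "i < n"
  shows "(deflation c q *\<^sub>v v) $ i
    = (v $ i - (H *\<^sub>v v) $ i / of_real c - of_real (\<psi> i / ground_state_sqnorm) * overlap v) / of_real q"
proof -
  have N: "deflation c q \<in> carrier_mat n n"
    by (simp add: deflation_def)
  have "(deflation c q *\<^sub>v v) $ i = (\<Sum>j<n. ((if i = j then v $ j else 0) - H $$ (i, j) * v $ j / of_real c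
      - of_real (\<psi> i / ground_state_sqnorm) * (of_real (\<psi> j) * v $ j)) / of_real q)"
    unfolding mult_mat_vec_index_sum[OF N v i] using i unfolding deflation_def
    by (intro sum.cong refl) (auto simp: field_simps)
  also have "\<dots> = ((\<Sum>j<n. if i = j then v $ j else 0) - (\<Sum>j<n. H $$ (i, j) * v $ j) / of_real c
      - of_real (\<psi> i / ground_state_sqnorm) * overlap v) / of_real q"
    unfolding overlap_def by (simp add: sum_divide_distrib[symmetric] sum_subtractf sum_distrib_left)
  finally show ?thesis
    using i by (simp add: mult_mat_vec_index_sum[OF hamiltonian_carrier v i])
qed

lemma overlap_deflation:
  assumes v: "v \<in> carrier_vec n" and "q \<noteq> 0"
  shows "overlap (deflation c q *\<^sub>v v) = 0"
proof (cases "n = 0")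
  case True
  then show ?thesis unfolding overlap_def by simp
next
  case False
  then have "0 < ground_state_sqnorm"
    by (intro ground_state_sqnorm_pos) simp
  have "of_real q * overlap (deflation c q *\<^sub>v v)
      = (\<Sum>i<n. of_real q * (of_real (\<psi> i) * (deflation c q *\<^sub>v v) $ i))"
    unfolding overlap_def sum_distrib_left ..
  also have "\<dots> = (\<Sum>i<n. of_real (\<psi> i) * v $ i
      - of_real (\<psi> i) * (H *\<^sub>v v) $ i / of_real c - of_real ((\<psi> i)\<^sup>2 / ground_state_sqnorm) * overlap v)"
    using \<open>q \<noteq> 0\<close>
    by (intro sum.cong refl) (simp add: deflation_mult_vec[OF v] field_simps power2_eq_square)
  also have "\<dots> = overlap v - overlap (H *\<^sub>v v) / of_real c
      - (\<Sum>i<n. of_real ((\<psi> i)\<^sup>2 / ground_state_sqnorm)) * overlap v"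
    unfolding overlap_def sum_subtractf sum_divide_distrib[symmetric] sum_distrib_right ..
  also have "(\<Sum>i<n. of_real ((\<psi> i)\<^sup>2 / ground_state_sqnorm)) = (1 :: complex)"
    unfolding of_real_sum[symmetric] sum_divide_distrib[symmetric]
    using \<open>0 < ground_state_sqnorm\<close> by (simp add: ground_state_sqnorm_def)
  also have "overlap v - overlap (H *\<^sub>v v) / of_real c - 1 * overlap v = 0"
    using overlap_hamiltonian[OF v] by simp
  finally show ?thesis using \<open>q \<noteq> 0\<close> by simp
qed

lemma deflation_eigenvector:
  assumes "eigenvector (deflation c q) v \<nu>" "\<nu> \<noteq> 0" "0 < c" "0 < q"
  shows "overlap v = 0" and "eigenvector H v (of_real c * (1 - of_real q * \<nu>))"
proof -
  have v: "v \<in> carrier_vec n" "v \<noteq> 0\<^sub>v n" and Nv: "deflation c q *\<^sub>v v = \<nu> \<cdot>\<^sub>v v"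
    using assms(1) unfolding eigenvector_def deflation_def by auto
  have "\<nu> * overlap v = overlap (deflation c q *\<^sub>v v)"
    unfolding Nv overlap_def using v by (simp add: sum_distrib_left algebra_simps)
  then show "overlap v = 0"
    using overlap_deflation[OF v(1)] assms(2,4) by simp
  have "H *\<^sub>v v = (of_real c * (1 - of_real q * \<nu>)) \<cdot>\<^sub>v v"
  proof (rule eq_vecI)
    fix i assume "i < dim_vec ((of_real c * (1 - of_real q * \<nu>)) \<cdot>\<^sub>v v)"
    then have i: "i < n" using v by simp
    have "\<nu> * v $ i = (v $ i - (H *\<^sub>v v) $ i / of_real c) / of_real q"
      using deflation_mult_vec[OF v(1) i] Nv i v \<open>overlap v = 0\<close> by (metis index_smult_vec(1) mult_zero_right diff_zero carrier_vecD)
    then show "(H *\<^sub>v v) $ i = ((of_real c * (1 - of_real q * \<nu>)) \<cdot>\<^sub>v v) $ i"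
      using i v assms(3,4) by (simp add: field_simps)
  qed (use v hamiltonian_carrier[of n E W] in auto)
  then show "eigenvector H v (of_real c * (1 - of_real q * \<nu>))"
    using v hamiltonian_carrier[of n E W] unfolding eigenvector_def by auto
qed

lemma deflation_Rayleigh:
  assumes \<phi>: "\<phi> \<in> carrier_vec n" "overlap \<phi> = 0" and "0 < c" "0 < q"
  shows "cinner n \<phi> (deflation c q *\<^sub>v \<phi>) = of_real ((sqnorm n \<phi> - dirichlet_form \<phi> / c) / q)"
proof -
  have "cinner n \<phi> (deflation c q *\<^sub>v \<phi>)
      = (\<Sum>i<n. cnj (\<phi> $ i) * \<phi> $ i / of_real q - cnj (\<phi> $ i) * (H *\<^sub>v \<phi>) $ i / (of_real c * of_real q))"
    unfolding cinner_def using assms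
    by (intro sum.cong refl) (simp add: deflation_mult_vec field_simps)
  also have "\<dots> = (cinner n \<phi> \<phi> - cinner n \<phi> (H *\<^sub>v \<phi>) / of_real c) / of_real q"
    unfolding cinner_def sum_subtractf sum_divide_distrib[symmetric] using assms(3,4)
    by (simp add: field_simps)
  also have "\<dots> = of_real ((sqnorm n \<phi> - dirichlet_form \<phi> / c) / q)"
    unfolding cinner_self quadratic_form_eq[OF \<phi>(1)] by simp
  finally show ?thesis .
qed

lemma spectral_radius_deflation_lt_1:
  assumes conn: "graph_connected n E" and "0 < n" and c: "0 < c" and q: "0 < q"
    and K: "\<And>x. x < n \<Longrightarrow> real (degree_of n E x) + W x \<le> K" and "2 * K < c"
    and gap: "\<And>\<mu>. eigenvalue H \<mu> \<Longrightarrow> \<mu> \<noteq> 0 \<Longrightarrow> b \<le> Re \<mu>" and "1 - b / c < q"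
  shows "spectral_radius (deflation c q) < 1"
proof -
  have "cmod \<nu> < 1" if eigenvalue: "eigenvalue (deflation c q) \<nu>" for \<nu>
  proof (cases "\<nu> = 0")
    case False
    obtain v where ev: "eigenvector (deflation c q) v \<nu>"
      using eigenvalue unfolding eigenvalue_def by blast
    have v: "v \<in> carrier_vec n" "v \<noteq> 0\<^sub>v n"
      using ev unfolding eigenvector_def deflation_def by auto
    define \<mu> where "\<mu> = of_real c * (1 - of_real q * \<nu>)"
    have evH: "eigenvector H v \<mu>" and "overlap v = 0"
      unfolding \<mu>_def using deflation_eigenvector[OF ev False c q] by auto
    define t where "t = dirichlet_form v / sqnorm n v"
    have \<mu>_t: "\<mu> = of_real t"
      unfolding t_def by (rule eigenvector_Rayleigh[OF evH])
    have "0 < t"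
      unfolding t_def using dirichlet_form_pos[OF conn v \<open>overlap v = 0\<close>] sqnorm_pos[OF v] by simp
    then have "b \<le> t"
      using gap[of \<mu>] evH \<mu>_t unfolding eigenvalue_def by auto
    have "t \<le> 2 * K"
      unfolding t_def using dirichlet_form_le[OF K, of v] sqnorm_pos[OF v] by (simp add: divide_le_eq)
    have "\<nu> = of_real ((1 - t / c) / q)"
      using \<mu>_def \<mu>_t c q by (simp add: field_simps)
    moreover have "\<bar>(1 - t / c) / q\<bar> < 1"
      using \<open>b \<le> t\<close> \<open>t \<le> 2 * K\<close> \<open>2 * K < c\<close> \<open>1 - b / c < q\<close> c q
      by (simp add: field_simps abs_less_iff)
    ultimately show ?thesis by (simp only: norm_of_real)
  qed simp
  then show ?thesis
    using spectral_radius_mem_max(1)[of "deflation c q" n] \<open>0 < n\<close>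
    unfolding spectrum_def by (auto simp: deflation_def)
qed

text \<open>With \<open>c\<close> above the spectrum and \<open>1 - b / c < q < 1 - R / c\<close>, where \<open>R\<close> is the Rayleigh
  quotient of the trial vector, a gap \<open>[0, b)\<close> above the ground state would make the spectral radius of
  \<open>deflation c q\<close> less than 1 while the trial vector has Rayleigh quotient above 1.\<close>

theorem exists_eigenvalue_below:
  assumes conn: "graph_connected n E"
    and \<phi>: "\<phi> \<in> carrier_vec n" "\<phi> \<noteq> 0\<^sub>v n" "overlap \<phi> = 0"
    and small: "dirichlet_form \<phi> < b * sqnorm n \<phi>"
  shows "\<exists>\<mu>. eigenvalue H \<mu> \<and> \<mu> \<noteq> 0 \<and> Re \<mu> < b"
proof (rule ccontr)
  assume "\<not> ?thesis"
  then have gap: "\<And>\<mu>. eigenvalue H \<mu> \<Longrightarrow> \<mu> \<noteq> 0 \<Longrightarrow> b \<le> Re \<mu>"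
    by force
  obtain K where "0 \<le> K" and K: "\<And>x. x < n \<Longrightarrow> real (degree_of n E x) + W x \<le> K"
    using hamiltonian_diagonal_bounded by blast
  have pos: "0 < sqnorm n \<phi>"
    using sqnorm_pos[OF \<phi>(1,2)] .
  then have "0 < n"
    unfolding sqnorm_def by (cases n) auto
  define R where "R = dirichlet_form \<phi> / sqnorm n \<phi>"
  have "0 \<le> R" "R < b"
    unfolding R_def using dirichlet_form_nonneg[of \<phi>] pos small by (simp_all add: divide_less_eq)
  define c where "c = 2 * K + b"
  define q where "q = 1 - (R + b) / (2 * c)"
  have "0 < c" "2 * K < c"
    unfolding c_def using \<open>0 \<le> K\<close> \<open>0 \<le> R\<close> \<open>R < b\<close> by simp_all
  have "(R + b) / (2 * c) < 2 * b / (2 * c)" "2 * R / (2 * c) < (R + b) / (2 * c)"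
    using \<open>R < b\<close> \<open>0 < c\<close> by (intro divide_strict_right_mono; simp)+
  moreover have "(R + b) / (2 * c) < 1"
    using \<open>R < b\<close> \<open>0 < c\<close> \<open>2 * K < c\<close> \<open>0 \<le> K\<close> by (simp add: divide_less_eq c_def)
  ultimately have "0 < q" "1 - b / c < q" "q < 1 - R / c"
    unfolding q_def by simp_all
  have "spectral_radius (deflation c q) < 1"
    using spectral_radius_deflation_lt_1[OF conn \<open>0 < n\<close> \<open>0 < c\<close> \<open>0 < q\<close> K \<open>2 * K < c\<close> gap \<open>1 - b / c < q\<close>] .
  then have "Re (cinner n \<phi> (deflation c q *\<^sub>v \<phi>)) \<le> sqnorm n \<phi>"
    by (rule hermitian_Rayleigh_le_sqnorm[OF hermitian_deflation _ \<phi>(1)])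
  moreover have "Re (cinner n \<phi> (deflation c q *\<^sub>v \<phi>)) = (1 - R / c) / q * sqnorm n \<phi>"
    unfolding deflation_Rayleigh[OF \<phi>(1,3) \<open>0 < c\<close> \<open>0 < q\<close>] R_def using pos by (simp add: field_simps)
  moreover have "sqnorm n \<phi> < (1 - R / c) / q * sqnorm n \<phi>"
  proof -
    have "1 < (1 - R / c) / q"
      using \<open>q < 1 - R / c\<close> \<open>0 < q\<close> by (simp add: less_divide_eq)
    then show ?thesis
      using mult_strict_right_mono[OF _ pos] by fastforce
  qed
  ultimately show False by simp
qed

theorem spectral_gap_hamiltonian_less:
  assumes "graph_connected n E"
    and "\<phi> \<in> carrier_vec n" "\<phi> \<noteq> 0\<^sub>v n" "overlap \<phi> = 0"
    and "dirichlet_form \<phi> < b * sqnorm n \<phi>"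
  shows "spectral_gap H < b"
proof -
  obtain \<mu> where \<mu>: "eigenvalue H \<mu>" "\<mu> \<noteq> 0" "Re \<mu> < b"
    using exists_eigenvalue_below[OF assms] by blast
  have "0 < Re \<mu>"
    using eigenvalue_real_nonneg[OF \<mu>(1)] \<mu>(2) by (metis less_eq_real_def of_real_0)
  have "0 < n"
    using sqnorm_pos[OF assms(2,3)] unfolding sqnorm_def by (cases n) auto
  show ?thesis
    using spectral_gap_less[OF hamiltonian_carrier eigenvalue_real_nonneg(2) eigenvalue_0[OF \<open>0 < n\<close>]
        \<mu>(1) \<open>0 < Re \<mu>\<close> \<mu>(3)] .
qed

end

section \<open>The caterpillar and its ground state\<close>

lemma cat_adj_sym: "cat_adj l x y = cat_adj l y x"
  unfolding cat_adj_def by auto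

lemma cat_par_eq_iff:
  assumes "2 * l < y"
  shows "cat_par l y = x \<longleftrightarrow> 1 \<le> x \<and> (y = 2 * l + 2 * x - 1 \<or> y = 2 * l + 2 * x)"
proof -
  define t where "t = y - (2 * l + 1)"
  have y: "y = 2 * l + 1 + t" unfolding t_def using assms by simp
  have "t = 2 * (t div 2) + t mod 2" "t mod 2 = 0 \<or> t mod 2 = 1" by auto
  then show ?thesis unfolding cat_par_def t_def[symmetric] using y by auto
qed

lemma cat_adj_irrefl: "\<not> cat_adj l x x"
proof
  assume "cat_adj l x x"
  then have "2 * l < x" "x < cat_n l" "cat_par l x = x" unfolding cat_adj_def by auto
  with cat_par_eq_iff[of l x x] show False unfolding cat_n_def by auto
qed

lemma cat_par_bounds:
  assumes "2 \<le> l" "2 * l < v" "v < cat_n l"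
  shows "1 \<le> cat_par l v" "cat_par l v \<le> 2 * l - 1"
  using assms unfolding cat_par_def cat_n_def by auto

lemma cat_adj_spine_iff:
  assumes "1 \<le> x" "x \<le> 2 * l"
  shows "cat_adj l x y \<longleftrightarrow> (y \<le> 2 * l \<and> (x = y + 1 \<or> y = x + 1))
    \<or> (2 * l < y \<and> y < cat_n l \<and> (y = 2 * l + 2 * x - 1 \<or> y = 2 * l + 2 * x))"
  using cat_par_eq_iff[of l y x] assms unfolding cat_adj_def by auto

lemma cat_neighbours_first:
  assumes "2 \<le> l"
  shows "{y. y < cat_n l \<and> cat_adj l 0 y} = {1}"
proof -
  have "cat_adj l 0 y \<longleftrightarrow> y = 1" for y
    using cat_par_eq_iff[of l y 0] assms unfolding cat_adj_def cat_n_def by auto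
  moreover have "1 < cat_n l" using assms unfolding cat_n_def by simp
  ultimately show ?thesis by blast
qed

lemma cat_neighbours_last:
  assumes "2 \<le> l"
  shows "{y. y < cat_n l \<and> cat_adj l (2 * l) y} = {2 * l - 1}"
proof -
  have "cat_adj l (2 * l) y \<longleftrightarrow> y = 2 * l - 1" for y
    using cat_adj_spine_iff[of "2 * l" l y] assms unfolding cat_n_def by auto
  then show ?thesis using assms unfolding cat_n_def by auto
qed

lemma cat_neighbours_interior:
  assumes "2 \<le> l" "1 \<le> x" "x \<le> 2 * l - 1"
  shows "{y. y < cat_n l \<and> cat_adj l x y} = {x - 1, x + 1, 2 * l + 2 * x - 1, 2 * l + 2 * x}"
proof -
  have "y < cat_n l \<and> cat_adj l x y \<longleftrightarrow> y \<in> {x - 1, x + 1, 2 * l + 2 * x - 1, 2 * l + 2 * x}" for y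
  proof -
    have adj: "cat_adj l x y \<longleftrightarrow> (y \<le> 2 * l \<and> (x = y + 1 \<or> y = x + 1))
        \<or> (2 * l < y \<and> y < cat_n l \<and> (y = 2 * l + 2 * x - 1 \<or> y = 2 * l + 2 * x))"
      by (rule cat_adj_spine_iff) (use assms in auto)
    show ?thesis unfolding adj using assms unfolding cat_n_def by auto
  qed
  then show ?thesis by auto
qed

lemma cat_neighbours_pendant:
  assumes "2 \<le> l" "2 * l < v" "v < cat_n l"
  shows "{y. y < cat_n l \<and> cat_adj l v y} = {cat_par l v}"
proof -
  have "cat_par l v < cat_n l"
    using cat_par_bounds[OF assms] assms(1) unfolding cat_n_def by simp
  moreover have "\<not> (2 * l < y \<and> y < cat_n l \<and> v = cat_par l y)" for y
    using cat_par_bounds[OF assms(1), of y] assms by auto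
  ultimately show ?thesis using assms unfolding cat_adj_def by auto
qed

lemma graph_connected_caterpillar:
  assumes l: "2 \<le> l"
  shows "graph_connected (cat_n l) (cat_adj l)"
proof -
  let ?R = "\<lambda>a b. a < cat_n l \<and> b < cat_n l \<and> cat_adj l a b"
  have spine: "?R\<^sup>*\<^sup>* 0 i" if "i \<le> 2 * l" for i
    using that
  proof (induction i)
    case (Suc i)
    then have "?R i (Suc i)" using l unfolding cat_adj_def cat_n_def by auto
    with Suc show ?case by (auto intro: rtranclp.rtrancl_into_rtrancl)
  qed simp
  have "?R\<^sup>*\<^sup>* 0 x" if x: "x < cat_n l" for x
  proof (cases "x \<le> 2 * l")
    case False
    then have p: "2 * l < x" by simp
    have "cat_par l x \<le> 2 * l - 1" using cat_par_bounds[OF l p x] by simp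
    then have "?R\<^sup>*\<^sup>* 0 (cat_par l x)" "?R (cat_par l x) x"
      using spine x p l unfolding cat_adj_def cat_n_def by auto
    then show ?thesis by (rule rtranclp.rtrancl_into_rtrancl)
  qed (use spine in simp)
  then show ?thesis unfolding graph_connected_def by blast
qed

definition spine_potential :: "nat \<Rightarrow> nat \<Rightarrow> real" where
  "spine_potential l j = (if j = 0 then 0 else - 1/2 - real j / (4 * real l))"

definition pendant_potential :: "nat \<Rightarrow> nat \<Rightarrow> real" where
  "pendant_potential l j =
     (if j = l then 7 else if j = 1 then 1 / (11/12 - 1 / (8 * real l)) - 1
      else 1 / (2/3 - real j / (8 * real l)) - 1)"

lemma cat_W_spine: "v \<le> 2 * l \<Longrightarrow> cat_W l v = spine_potential l (cat_level l v)"
  unfolding cat_W_def spine_potential_def Let_def by simp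

lemma cat_W_pendant: "2 * l < v \<Longrightarrow> cat_W l v = pendant_potential l (cat_level l (cat_par l v))"
  unfolding cat_W_def pendant_potential_def Let_def by simp

lemma cat_level_bounds:
  assumes "1 \<le> p" "p \<le> 2 * l - 1"
  shows "1 \<le> cat_level l p" "cat_level l p \<le> l"
  using assms unfolding cat_level_def by auto

lemma spine_potential_decreasing:
  assumes "2 \<le> l" "j < k" "k \<le> l"
  shows "spine_potential l k < spine_potential l j"
proof (cases "j = 0")
  case True
  have "0 < real k / (4 * real l)" using assms by simp
  then have "- 1/2 - real k / (4 * real l) < 0" by linarith
  then show ?thesis unfolding spine_potential_def using True assms by simp
next
  case False
  have "real j / (4 * real l) < real k / (4 * real l)"
    using assms by (simp add: divide_strict_right_mono)
  then show ?thesis unfolding spine_potential_def using False assms by simp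
qed

lemma spine_potential_nonpos: "spine_potential l j \<le> 0"
proof -
  have "0 \<le> real j / (4 * real l)" by simp
  then have "- 1/2 - real j / (4 * real l) \<le> 0" by linarith
  then show ?thesis unfolding spine_potential_def by simp
qed

lemma pendant_potential_pos:
  assumes "2 \<le> l" "1 \<le> j" "j \<le> l"
  shows "0 < pendant_potential l j"
proof -
  have l: "(2::real) \<le> real l" using assms by simp
  have "1 < 1 / (11/12 - 1 / (8 * real l))"
    using l by (simp add: field_simps)
  moreover have "1 < 1 / (2/3 - real j / (8 * real l))" if "j \<noteq> l"
  proof -
    have "0 < 2/3 - real j / (8 * real l)" "2/3 - real j / (8 * real l) < 1"
      using l assms by (simp_all add: field_simps)
    then show ?thesis by (simp add: less_divide_eq_1_pos)
  qed
  ultimately show ?thesis unfolding pendant_potential_def by auto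
qed

definition spine_amplitude :: "nat \<Rightarrow> real" where
  "spine_amplitude j = (if j = 0 then 1 else (2/3) ^ (j - 1))"

definition pendant_ratio :: "nat \<Rightarrow> nat \<Rightarrow> real" where
  "pendant_ratio l j = 1 / (1 + pendant_potential l j)"

definition cat_ground_state :: "nat \<Rightarrow> nat \<Rightarrow> real" where
  "cat_ground_state l v =
     (if v \<le> 2 * l then spine_amplitude (cat_level l v)
      else spine_amplitude (cat_level l (cat_par l v)) * pendant_ratio l (cat_level l (cat_par l v)))"

lemma spine_amplitude_pos: "0 < spine_amplitude j"
  unfolding spine_amplitude_def by simp

lemma pendant_ratio_eq:
  assumes "2 \<le> l" "1 \<le> j" "j \<le> l"
  shows "pendant_ratio l j = (if j = l then 1/8 else if j = 1 then 11/12 - 1 / (8 * real l)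
    else 2/3 - real j / (8 * real l))"
proof -
  have l: "(2::real) \<le> real l" using assms by simp
  have "0 < 11/12 - 1 / (8 * real l)" using l by (simp add: field_simps)
  moreover have "j \<noteq> l \<Longrightarrow> 0 < 2/3 - real j / (8 * real l)" using l assms by (simp add: field_simps)
  ultimately show ?thesis unfolding pendant_ratio_def pendant_potential_def by auto
qed

lemma spine_amplitude_eq_interior:
  assumes l: "2 \<le> l" and j: "1 \<le> j" "j + 1 \<le> l"
  shows "(4 + spine_potential l j) * spine_amplitude j
    = spine_amplitude (j - 1) + spine_amplitude (j + 1) + 2 * spine_amplitude j * pendant_ratio l j"
proof -
  have r: "pendant_ratio l j = (if j = 1 then 11/12 - 1 / (8 * real l) else 2/3 - real j / (8 * real l))"
    using pendant_ratio_eq[OF l j(1)] j by auto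
  have l0: "0 < real l" using l by simp
  show ?thesis
  proof (cases "j = 1")
    case True
    then show ?thesis unfolding r spine_potential_def spine_amplitude_def using l0 by (simp add: field_simps)
  next
    case False
    define m where "m = j - 2"
    have m: "j = m + 2" unfolding m_def using j False by simp
    have a: "spine_amplitude (j - 1) = (2/3)^m" "spine_amplitude j = (2/3)^m * (2/3)"
      "spine_amplitude (j + 1) = (2/3)^m * (4/9)"
      unfolding spine_amplitude_def m by (simp_all add: power_add)
    have w: "spine_potential l j = - 1/2 - (real m + 2) / (4 * real l)"
      unfolding spine_potential_def m by simp
    have "real j = real m + 2" unfolding m by simp
    then show ?thesis unfolding a r w using False l0 by (simp add: field_simps)
  qed
qed

lemma spine_amplitude_eq_centre:
  assumes l: "2 \<le> l"
  shows "(4 + spine_potential l l) * spine_amplitude l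
    = 2 * spine_amplitude (l - 1) + 2 * spine_amplitude l * pendant_ratio l l"
proof -
  have r: "pendant_ratio l l = 1/8" using pendant_ratio_eq[OF l _ order_refl] l by auto
  define m where "m = l - 2"
  have m: "l = m + 2" unfolding m_def using l by simp
  have a: "spine_amplitude (l - 1) = (2/3)^m" "spine_amplitude l = (2/3)^m * (2/3)"
    unfolding spine_amplitude_def m by (simp_all add: power_add)
  have "0 < real l" using l by simp
  then show ?thesis unfolding a r spine_potential_def by (simp add: field_simps)
qed

lemma spine_amplitude_eq_position:
  assumes l: "2 \<le> l" and x: "1 \<le> x" "x \<le> 2 * l - 1"
  shows "(4 + spine_potential l (cat_level l x)) * spine_amplitude (cat_level l x)
    = spine_amplitude (cat_level l (x - 1)) + spine_amplitude (cat_level l (x + 1))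
      + 2 * spine_amplitude (cat_level l x) * pendant_ratio l (cat_level l x)"
proof -
  consider (left) "x < l" | (centre) "x = l" | (right) "l < x" by linarith
  then show ?thesis
  proof cases
    case left
    then have "cat_level l x = x" "cat_level l (x - 1) = x - 1" "cat_level l (x + 1) = x + 1"
      unfolding cat_level_def by auto
    then show ?thesis using spine_amplitude_eq_interior[OF l x(1)] left by simp
  next
    case centre
    then have "cat_level l x = l" "cat_level l (x - 1) = l - 1" "cat_level l (x + 1) = l - 1"
      unfolding cat_level_def using l by auto
    then show ?thesis using spine_amplitude_eq_centre[OF l] by simp
  next
    case right
    define j where "j = cat_level l x"
    have "cat_level l (x - 1) = j + 1" "cat_level l (x + 1) = j - 1" "1 \<le> j" "j + 1 \<le> l"
      unfolding j_def cat_level_def using right x by auto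
    then show ?thesis using spine_amplitude_eq_interior[OF l, of j] unfolding j_def by simp
  qed
qed

lemma cat_ground_state_spine: "v \<le> 2 * l \<Longrightarrow> cat_ground_state l v = spine_amplitude (cat_level l v)"
  unfolding cat_ground_state_def by simp

lemma cat_ground_state_pendant:
  assumes l: "2 \<le> l" and v: "2 * l < v" "v < cat_n l"
  shows "0 < cat_ground_state l v"
    and "(1 + cat_W l v) * cat_ground_state l v = cat_ground_state l (cat_par l v)"
proof -
  let ?j = "cat_level l (cat_par l v)"
  have j: "1 \<le> ?j" "?j \<le> l"
    using cat_level_bounds[OF cat_par_bounds[OF l v]] by auto
  have pos: "0 < pendant_potential l ?j"
    by (rule pendant_potential_pos[OF l j])
  have psi: "cat_ground_state l v = spine_amplitude ?j / (1 + pendant_potential l ?j)"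
    unfolding cat_ground_state_def pendant_ratio_def using v by simp
  show "0 < cat_ground_state l v"
    unfolding psi using pos spine_amplitude_pos by simp
  have "cat_par l v \<le> 2 * l"
    using cat_par_bounds[OF l v] by linarith
  then show "(1 + cat_W l v) * cat_ground_state l v = cat_ground_state l (cat_par l v)"
    unfolding psi cat_W_pendant[OF v(1)] cat_ground_state_spine[OF \<open>cat_par l v \<le> 2 * l\<close>]
    using pos by simp
qed

lemma cat_ground_state_pos:
  assumes "2 \<le> l" "x < cat_n l"
  shows "0 < cat_ground_state l x"
proof (cases "x \<le> 2 * l")
  case True
  then show ?thesis by (simp add: cat_ground_state_spine spine_amplitude_pos)
next
  case False
  then show ?thesis using cat_ground_state_pendant(1)[OF assms(1) _ assms(2)] by simp
qed

lemma cat_ground_state_eq_interior: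
  assumes l: "2 \<le> l" and x: "1 \<le> x" "x \<le> 2 * l - 1"
  shows "(4 + cat_W l x) * cat_ground_state l x
    = sum (cat_ground_state l) {x - 1, x + 1, 2 * l + 2 * x - 1, 2 * l + 2 * x}"
proof -
  define j where "j = cat_level l x"
  have pendant: "cat_ground_state l y = spine_amplitude j * pendant_ratio l j"
    if "y = 2 * l + 2 * x - 1 \<or> y = 2 * l + 2 * x" for y
  proof -
    have "2 * l < y" using that x by auto
    moreover have "cat_par l y = x" using cat_par_eq_iff[OF \<open>2 * l < y\<close>] that x by auto
    ultimately show ?thesis unfolding cat_ground_state_def j_def by simp
  qed
  have distinct: "x - 1 \<noteq> x + 1" "x - 1 \<noteq> 2 * l + 2 * x - 1" "x - 1 \<noteq> 2 * l + 2 * x"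
    "x + 1 \<noteq> 2 * l + 2 * x - 1" "x + 1 \<noteq> 2 * l + 2 * x" "2 * l + 2 * x - 1 \<noteq> 2 * l + 2 * x"
    using x l by auto
  have spine: "x - 1 \<le> 2 * l" "x + 1 \<le> 2 * l" "x \<le> 2 * l" using x by linarith+
  have "sum (cat_ground_state l) {x - 1, x + 1, 2 * l + 2 * x - 1, 2 * l + 2 * x}
      = cat_ground_state l (x - 1) + cat_ground_state l (x + 1)
        + cat_ground_state l (2 * l + 2 * x - 1) + cat_ground_state l (2 * l + 2 * x)"
    using distinct by simp
  also have "\<dots> = spine_amplitude (cat_level l (x - 1)) + spine_amplitude (cat_level l (x + 1))
        + 2 * spine_amplitude j * pendant_ratio l j"
    using pendant[of "2 * l + 2 * x - 1"] pendant[of "2 * l + 2 * x"]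
    unfolding cat_ground_state_spine[OF spine(1)] cat_ground_state_spine[OF spine(2)] by simp
  also have "\<dots> = (4 + spine_potential l j) * spine_amplitude j"
    unfolding j_def by (rule spine_amplitude_eq_position[OF l x, symmetric])
  finally show ?thesis
    unfolding j_def cat_W_spine[OF spine(3)] cat_ground_state_spine[OF spine(3)] by simp
qed

lemma cat_ground_state_eq:
  assumes l: "2 \<le> l" and x: "x < cat_n l"
  shows "(real (degree_of (cat_n l) (cat_adj l) x) + cat_W l x) * cat_ground_state l x
       = (\<Sum>y<cat_n l. if cat_adj l x y then cat_ground_state l y else 0)"
proof -
  let ?N = "{y. y < cat_n l \<and> cat_adj l x y}"
  have sum: "(\<Sum>y<cat_n l. if cat_adj l x y then cat_ground_state l y else 0) = sum (cat_ground_state l) ?N"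
  proof -
    have "sum (cat_ground_state l) {y \<in> {..<cat_n l}. cat_adj l x y}
        = (\<Sum>y<cat_n l. if cat_adj l x y then cat_ground_state l y else 0)"
      by (rule sum.inter_filter) simp
    moreover have "{y \<in> {..<cat_n l}. cat_adj l x y} = ?N" by auto
    ultimately show ?thesis by simp
  qed
  have degree: "degree_of (cat_n l) (cat_adj l) x = card ?N"
    unfolding degree_of_def ..
  consider (first) "x = 0" | (last) "x = 2 * l" | (interior) "1 \<le> x" "x \<le> 2 * l - 1" | (pendant) "2 * l < x"
    by linarith
  then have "(real (card ?N) + cat_W l x) * cat_ground_state l x = sum (cat_ground_state l) ?N"
  proof cases
    case first
    have "cat_level l 0 = 0" "cat_level l 1 = 1" unfolding cat_level_def using l by auto
    then show ?thesis unfolding first cat_neighbours_first[OF l] using l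
      by (simp add: cat_ground_state_def cat_W_spine spine_potential_def spine_amplitude_def)
  next
    case last
    have "cat_level l (2 * l) = 0" "cat_level l (2 * l - 1) = 1" unfolding cat_level_def using l by auto
    then show ?thesis unfolding last cat_neighbours_last[OF l] using l
      by (simp add: cat_ground_state_def cat_W_spine spine_potential_def spine_amplitude_def)
  next
    case interior
    have "x - 1 \<noteq> x + 1" "x - 1 \<noteq> 2 * l + 2 * x - 1" "x - 1 \<noteq> 2 * l + 2 * x"
      "x + 1 \<noteq> 2 * l + 2 * x - 1" "x + 1 \<noteq> 2 * l + 2 * x" "2 * l + 2 * x - 1 \<noteq> 2 * l + 2 * x"
      using interior l by auto
    then have "card {x - 1, x + 1, 2 * l + 2 * x - 1, 2 * l + 2 * x} = 4" by simp
    then show ?thesis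
      unfolding cat_neighbours_interior[OF l interior] cat_ground_state_eq_interior[OF l interior, symmetric]
      by simp
  next
    case pendant
    then show ?thesis unfolding cat_neighbours_pendant[OF l pendant x]
      using cat_ground_state_pendant(2)[OF l pendant x] by simp
  qed
  then show ?thesis unfolding sum degree .
qed

lemma ground_state_caterpillar:
  assumes "2 \<le> l"
  shows "ground_state (cat_n l) (cat_adj l) (cat_W l) (cat_ground_state l)"
  unfolding ground_state_def using cat_adj_sym cat_ground_state_pos[OF assms] cat_ground_state_eq[OF assms] by blast

section \<open>The trial vector\<close>

definition cat_sign :: "nat \<Rightarrow> nat \<Rightarrow> real" where
  "cat_sign l v = (let p = (if v \<le> 2 * l then v else cat_par l v) in
     if p < l then 1 else if p = l then 0 else -1)"

text \<open>Mirror image in \<open>B_l\<close>. The parity of \<open>v - (2l+1)\<close> says whether a pendant \<open>v\<close> is the upper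
  or the lower one at its spine vertex; the reflection keeps it.\<close>

definition cat_reflect :: "nat \<Rightarrow> nat \<Rightarrow> nat" where
  "cat_reflect l v = (if v \<le> 2 * l then 2 * l - v
     else 2 * l + 1 + 2 * (2 * l - cat_par l v - 1) + (v - (2 * l + 1)) mod 2)"

lemma cat_pendant_decomp:
  assumes "2 * l < v"
  shows "v = 2 * l + 1 + 2 * (cat_par l v - 1) + (v - (2 * l + 1)) mod 2"
proof -
  define t where "t = v - (2 * l + 1)"
  have "t = 2 * (t div 2) + t mod 2" by simp
  then show ?thesis unfolding cat_par_def t_def[symmetric] using assms unfolding t_def by simp
qed

lemma cat_par_pendant:
  assumes "e < 2"
  shows "cat_par l (2 * l + 1 + 2 * q + e) = q + 1" "(2 * l + 1 + 2 * q + e - (2 * l + 1)) mod 2 = e"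
  using assms unfolding cat_par_def by auto

lemma cat_level_reflect: "p \<le> 2 * l \<Longrightarrow> cat_level l (2 * l - p) = cat_level l p"
  unfolding cat_level_def by auto

lemma cat_reflect_pendant:
  assumes l: "2 \<le> l" and v: "2 * l < v" "v < cat_n l"
  shows "cat_reflect l v < cat_n l" "cat_reflect l (cat_reflect l v) = v"
    "2 * l < cat_reflect l v" "cat_par l (cat_reflect l v) = 2 * l - cat_par l v"
proof -
  define p where "p = cat_par l v"
  define e where "e = (v - (2 * l + 1)) mod 2"
  have e: "e < 2" unfolding e_def by simp
  have p: "1 \<le> p" "p \<le> 2 * l - 1" unfolding p_def using cat_par_bounds[OF l v] by auto
  have r: "cat_reflect l v = 2 * l + 1 + 2 * (2 * l - p - 1) + e"
    unfolding cat_reflect_def p_def e_def using v by simp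
  show par: "cat_par l (cat_reflect l v) = 2 * l - cat_par l v"
    unfolding r cat_par_pendant(1)[OF e] using p unfolding p_def by simp
  show "cat_reflect l v < cat_n l" "2 * l < cat_reflect l v"
    unfolding r using p e l unfolding cat_n_def by simp_all
  have "cat_reflect l (cat_reflect l v) = 2 * l + 1 + 2 * (2 * l - (2 * l - p) - 1) + e"
    unfolding cat_reflect_def[of l "cat_reflect l v"] using par cat_par_pendant(2)[OF e] r
    unfolding p_def by simp
  also have "\<dots> = v"
    using p cat_pendant_decomp[OF v(1)] unfolding p_def e_def by simp
  finally show "cat_reflect l (cat_reflect l v) = v" .
qed

lemma cat_reflect_props:
  assumes l: "2 \<le> l" and v: "v < cat_n l"
  shows "cat_reflect l v < cat_n l" "cat_reflect l (cat_reflect l v) = v"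
    "cat_ground_state l (cat_reflect l v) = cat_ground_state l v"
    "cat_sign l (cat_reflect l v) = - cat_sign l v"
proof -
  have "cat_reflect l v < cat_n l \<and> cat_reflect l (cat_reflect l v) = v
      \<and> cat_ground_state l (cat_reflect l v) = cat_ground_state l v
      \<and> cat_sign l (cat_reflect l v) = - cat_sign l v"
  proof (cases "v \<le> 2 * l")
    case True
    then show ?thesis
      using l cat_level_reflect[OF True]
      by (auto simp: cat_reflect_def cat_n_def cat_ground_state_def cat_sign_def Let_def)
  next
    case False
    then have v2: "2 * l < v" by simp
    note r = cat_reflect_pendant[OF l v2 v]
    have p: "1 \<le> cat_par l v" "cat_par l v \<le> 2 * l - 1" using cat_par_bounds[OF l v2 v] by auto
    have "cat_ground_state l (cat_reflect l v) = cat_ground_state l v"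
      unfolding cat_ground_state_def using r(3,4) v2 cat_level_reflect[of "cat_par l v" l] p by simp
    moreover have "cat_sign l (cat_reflect l v) = - cat_sign l v"
      unfolding cat_sign_def Let_def using r(3,4) v2 p by auto
    ultimately show ?thesis using r(1,2) by simp
  qed
  then show "cat_reflect l v < cat_n l" "cat_reflect l (cat_reflect l v) = v"
    "cat_ground_state l (cat_reflect l v) = cat_ground_state l v"
    "cat_sign l (cat_reflect l v) = - cat_sign l v"
    by auto
qed

lemma cat_sign_orthogonal:
  assumes l: "2 \<le> l"
  shows "(\<Sum>i<cat_n l. cat_sign l i * (cat_ground_state l i)\<^sup>2) = 0"
proof -
  define g where "g i = cat_sign l i * (cat_ground_state l i)\<^sup>2" for i
  have "(\<Sum>i<cat_n l. g i) = (\<Sum>i<cat_n l. g (cat_reflect l i))"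
    by (rule sum.reindex_bij_witness[of _ "cat_reflect l" "cat_reflect l"]) (auto simp: cat_reflect_props[OF l])
  also have "\<dots> = - (\<Sum>i<cat_n l. g i)"
    unfolding sum_negf[symmetric] by (intro sum.cong refl) (simp add: g_def cat_reflect_props[OF l])
  finally show ?thesis unfolding g_def by simp
qed

definition cat_centre_edges :: "nat \<Rightarrow> (nat \<times> nat) set" where
  "cat_centre_edges l = {(l - 1, l), (l, l - 1), (l, l + 1), (l + 1, l)}"

definition cat_trial_vec :: "nat \<Rightarrow> complex vec" where
  "cat_trial_vec l = vec (cat_n l) (\<lambda>i. of_real (cat_sign l i * cat_ground_state l i))"

lemma cat_sign_spine: "v \<le> 2 * l \<Longrightarrow> cat_sign l v = (if v < l then 1 else if v = l then 0 else -1)"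
  unfolding cat_sign_def Let_def by simp

lemma cat_sign_adj:
  assumes l: "2 \<le> l" and x: "x < cat_n l" and y: "y < cat_n l" and adj: "cat_adj l x y"
    and not_centre: "(x, y) \<notin> cat_centre_edges l"
  shows "cat_sign l x = cat_sign l y"
proof -
  consider (spine) "x \<le> 2 * l" "y \<le> 2 * l" "x = y + 1 \<or> y = x + 1"
    | (up) "2 * l < x" "y = cat_par l x" | (down) "2 * l < y" "x = cat_par l y"
    using adj unfolding cat_adj_def by auto
  then show ?thesis
  proof cases
    case spine
    then show ?thesis unfolding cat_sign_spine[OF spine(1)] cat_sign_spine[OF spine(2)]
      using not_centre l unfolding cat_centre_edges_def by auto
  next
    case up
    have "y \<le> 2 * l" using cat_par_bounds[OF l up(1) x] up(2) by linarith
    then show ?thesis unfolding cat_sign_def Let_def using up by simp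
  next
    case down
    have "x \<le> 2 * l" using cat_par_bounds[OF l down(1) y] down(2) by linarith
    then show ?thesis unfolding cat_sign_def Let_def using down by simp
  qed
qed

lemma dirichlet_term_trial:
  assumes l: "2 \<le> l" and x: "x < cat_n l" and y: "y < cat_n l"
  shows "ground_state.dirichlet_term (cat_adj l) (cat_ground_state l) (cat_trial_vec l) x y
    = (if (x, y) \<in> cat_centre_edges l then cat_ground_state l (l - 1) * cat_ground_state l l / 2 else 0)"
proof -
  interpret G: ground_state "cat_n l" "cat_adj l" "cat_W l" "cat_ground_state l"
    by (rule ground_state_caterpillar[OF l])
  have quot: "cat_trial_vec l $ z / of_real (cat_ground_state l z) = of_real (cat_sign l z)"
    if "z < cat_n l" for z
    using that cat_ground_state_pos[OF l, of z] unfolding cat_trial_vec_def by simp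
  show ?thesis
  proof (cases "(x, y) \<in> cat_centre_edges l")
    case True
    have "cat_ground_state l (l + 1) = cat_ground_state l (l - 1)"
      unfolding cat_ground_state_def cat_level_def using l by auto
    moreover have "cat_sign l (l - 1) = 1" "cat_sign l l = 0" "cat_sign l (l + 1) = -1"
      using l by (auto simp: cat_sign_spine)
    moreover have "cat_adj l (l - 1) l" "cat_adj l l (l - 1)" "cat_adj l l (l + 1)" "cat_adj l (l + 1) l"
      using l unfolding cat_adj_def by auto
    ultimately show ?thesis using True
      unfolding G.dirichlet_term_def quot[OF x] quot[OF y] cat_centre_edges_def
      by (auto simp: algebra_simps)
  next
    case False
    then show ?thesis
      using cat_sign_adj[OF l x y _ False] quot[OF x] quot[OF y] by (simp add: G.dirichlet_term_def)
  qed
qed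

lemma dirichlet_form_trial:
  assumes l: "2 \<le> l"
  shows "ground_state.dirichlet_form (cat_n l) (cat_adj l) (cat_ground_state l) (cat_trial_vec l)
    = 2 * cat_ground_state l (l - 1) * cat_ground_state l l"
proof -
  interpret G: ground_state "cat_n l" "cat_adj l" "cat_W l" "cat_ground_state l"
    by (rule ground_state_caterpillar[OF l])
  define c where "c = cat_ground_state l (l - 1) * cat_ground_state l l / 2"
  let ?N = "{..<cat_n l} \<times> {..<cat_n l}" and ?T = "cat_centre_edges l"
  have "l + 1 < cat_n l" using l unfolding cat_n_def by simp
  then have T_sub: "?T \<subseteq> ?N" unfolding cat_centre_edges_def by auto
  have "G.dirichlet_form (cat_trial_vec l) = (\<Sum>p\<in>?N. G.dirichlet_term (cat_trial_vec l) (fst p) (snd p))"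
    unfolding G.dirichlet_form_def by (simp add: sum.cartesian_product split_def)
  also have "\<dots> = (\<Sum>p\<in>?N. if p \<in> ?T then c else 0)"
    by (intro sum.cong refl) (auto simp: dirichlet_term_trial[OF l] c_def)
  also have "\<dots> = of_nat (card ?T) * c"
    using T_sub by (simp add: sum.If_cases Int_absorb1)
  also have "card ?T = 4"
  proof -
    have "l - 1 \<noteq> l" "l - 1 \<noteq> l + 1" using l by arith+
    then show ?thesis unfolding cat_centre_edges_def by (simp add: card_insert_if)
  qed
  finally show ?thesis unfolding c_def by simp
qed

lemma sqnorm_trial_ge: 
  assumes l: "2 \<le> l"
  shows "4 \<le> sqnorm (cat_n l) (cat_trial_vec l)"
proof -
  define f where "f = (\<lambda>i. (cmod (cat_trial_vec l $ i))\<^sup>2)"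
  have ends: "{0, 1, 2 * l - 1, 2 * l} \<subseteq> {..<cat_n l}"
    using l unfolding cat_n_def by auto
  have "f 0 = 1" "f 1 = 1" "f (2 * l - 1) = 1" "f (2 * l) = 1"
    using ends l by (auto simp: f_def cat_trial_vec_def norm_mult power_mult_distrib cat_sign_spine
        cat_ground_state_def cat_level_def spine_amplitude_def)
  then have "4 = sum f {0, 1, 2 * l - 1, 2 * l}"
    using l by simp
  also have "\<dots> \<le> sum f {..<cat_n l}"
    by (rule sum_mono2) (use ends in \<open>auto simp: f_def\<close>)
  finally show ?thesis unfolding sqnorm_def f_def .
qed

lemma dirichlet_form_trial_less:
  assumes l: "2 \<le> l"
  shows "ground_state.dirichlet_form (cat_n l) (cat_adj l) (cat_ground_state l) (cat_trial_vec l)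
    < 2 * (2/3) ^ (2 * l - 1) * sqnorm (cat_n l) (cat_trial_vec l)"
proof -
  define m where "m = l - 2"
  have lm: "l = m + 2" unfolding m_def using l by simp
  have psi: "cat_ground_state l (l - 1) = (2/3)^m" "cat_ground_state l l = (2/3)^m * (2/3)"
    unfolding cat_ground_state_def cat_level_def spine_amplitude_def lm by auto
  have bound: "2 * (2/3::real) ^ (2 * l - 1) = (2/3)^m * (2/3)^m * (16/27)"
  proof -
    have "2 * l - 1 = m + m + 3" unfolding lm by simp
    then have "(2/3::real) ^ (2 * l - 1) = (2/3)^m * (2/3)^m * (2/3)^3"
      by (simp only: power_add)
    then show ?thesis by (simp add: power3_eq_cube)
  qed
  have "2 * cat_ground_state l (l - 1) * cat_ground_state l l < 2 * (2/3) ^ (2 * l - 1) * 4"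
    unfolding psi bound by simp
  also have "\<dots> \<le> 2 * (2/3) ^ (2 * l - 1) * sqnorm (cat_n l) (cat_trial_vec l)"
    using sqnorm_trial_ge[OF l] by (intro mult_left_mono) auto
  finally show ?thesis unfolding dirichlet_form_trial[OF l] .
qed

lemma cat_W_pendant_pos:
  assumes "2 \<le> l" "2 * l < v" "v < cat_n l"
  shows "0 < cat_W l v"
  using cat_W_pendant[OF assms(2)] pendant_potential_pos[OF assms(1) cat_level_bounds[OF cat_par_bounds[OF assms]]]
  by simp

lemma cat_W_spine_nonpos: "v \<le> 2 * l \<Longrightarrow> cat_W l v \<le> 0"
  by (simp add: cat_W_spine spine_potential_nonpos)

lemma cat_W_descent:
  assumes l: "2 \<le> l" and v: "v < cat_n l" "v \<noteq> l"
  shows "\<exists>u < cat_n l. cat_adj l v u \<and> cat_W l u < cat_W l v"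
proof -
  have n: "2 * l < cat_n l" using l unfolding cat_n_def by simp
  consider (left) "v < l" | (right) "l < v" "v \<le> 2 * l" | (pendant) "2 * l < v" using v by linarith
  then show ?thesis
  proof cases
    case left
    have "cat_level l v = v" "cat_level l (v + 1) = v + 1" unfolding cat_level_def using left by auto
    then have "cat_W l (v + 1) < cat_W l v"
      using left l by (simp add: cat_W_spine spine_potential_decreasing)
    moreover have "cat_adj l v (v + 1)" "v + 1 < cat_n l" unfolding cat_adj_def using left n by auto
    ultimately show ?thesis by blast
  next
    case right
    have "cat_level l v = 2 * l - v" "cat_level l (v - 1) = 2 * l - v + 1"
      unfolding cat_level_def using right by auto
    then have "cat_W l (v - 1) < cat_W l v"
      using right l by (simp add: cat_W_spine spine_potential_decreasing)
    moreover have "cat_adj l v (v - 1)" "v - 1 < cat_n l" unfolding cat_adj_def using right n by auto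
    ultimately show ?thesis by blast
  next
    case pendant
    have p: "cat_par l v \<le> 2 * l" using cat_par_bounds[OF l pendant v(1)] by linarith
    then have "cat_W l (cat_par l v) < cat_W l v"
      using cat_W_spine_nonpos[OF p] cat_W_pendant_pos[OF l pendant v(1)] by simp
    moreover have "cat_adj l v (cat_par l v)" "cat_par l v < cat_n l"
      unfolding cat_adj_def using pendant v p n by auto
    ultimately show ?thesis by blast
  qed
qed

lemma cat_W_centre_min:
  assumes l: "2 \<le> l" and v: "v < cat_n l" "v \<noteq> l"
  shows "cat_W l l < cat_W l v"
proof (cases "v \<le> 2 * l")
  case True
  have "cat_level l l = l" "cat_level l v < l" unfolding cat_level_def using v True by auto
  then show ?thesis using True l by (simp add: cat_W_spine spine_potential_decreasing)
next
  case False
  then show ?thesis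
    using cat_W_spine_nonpos[of l l] cat_W_pendant_pos[OF l _ v(1)] by simp
qed

lemma cat_local_min_unique:
  assumes l: "2 \<le> l"
  shows "{x. x < cat_n l \<and> local_min (cat_n l) (cat_adj l) (cat_W l) x} = {l}"
proof -
  have "l < cat_n l" using l unfolding cat_n_def by simp
  moreover have "local_min (cat_n l) (cat_adj l) (cat_W l) l"
    unfolding local_min_def using cat_W_centre_min[OF l] cat_adj_irrefl[of l l] by (metis less_imp_le)
  moreover have "\<not> local_min (cat_n l) (cat_adj l) (cat_W l) x" if "x < cat_n l" "x \<noteq> l" for x
    using cat_W_descent[OF l that] unfolding local_min_def by (metis not_le)
  ultimately show ?thesis by auto
qed

lemma cat_spectral_gap_less:
  assumes l: "2 \<le> l"
  shows "spectral_gap (hamiltonian (cat_n l) (cat_adj l) (cat_W l)) < 2 * (2/3) ^ (2 * l - 1)"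
proof -
  interpret G: ground_state "cat_n l" "cat_adj l" "cat_W l" "cat_ground_state l"
    by (rule ground_state_caterpillar[OF l])
  have \<phi>: "cat_trial_vec l \<in> carrier_vec (cat_n l)"
    by (simp add: cat_trial_vec_def)
  have "cat_trial_vec l \<noteq> 0\<^sub>v (cat_n l)"
  proof
    assume "cat_trial_vec l = 0\<^sub>v (cat_n l)"
    then have "sqnorm (cat_n l) (cat_trial_vec l) = 0" by (simp add: sqnorm_def)
    with sqnorm_trial_ge[OF l] show False by simp
  qed
  moreover have "G.overlap (cat_trial_vec l) = 0"
  proof -
    have "G.overlap (cat_trial_vec l) = of_real (\<Sum>i<cat_n l. cat_sign l i * (cat_ground_state l i)\<^sup>2)"
      unfolding G.overlap_def of_real_sum
      by (intro sum.cong refl) (simp add: cat_trial_vec_def power2_eq_square)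
    then show ?thesis using cat_sign_orthogonal[OF l] by simp
  qed
  ultimately show ?thesis
    using G.spectral_gap_hamiltonian_less[OF graph_connected_caterpillar[OF l] \<phi>
        _ _ dirichlet_form_trial_less[OF l]] by blast
qed

theorem mainTheorem1:
  fixes l :: nat
  assumes "2 \<le> l"
  shows "(\<forall>v < cat_n l. v \<noteq> l \<longrightarrow>
            (\<exists>u < cat_n l. cat_adj l v u \<and> cat_W l u < cat_W l v))
       \<and> {x. x < cat_n l \<and> local_min (cat_n l) (cat_adj l) (cat_W l) x} = {l}
       \<and> (\<forall>v < cat_n l. v \<noteq> l \<longrightarrow> cat_W l l < cat_W l v)
       \<and> spectral_gap (hamiltonian (cat_n l) (cat_adj l) (cat_W l)) < 2 * (2/3) ^ (2 * l - 1)"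
  using cat_W_descent[OF assms] cat_local_min_unique[OF assms] cat_W_centre_min[OF assms]
    cat_spectral_gap_less[OF assms]
  by blast

end
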